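(* Let $n\ge 4$, $N=\{1,\dots,n\}$, fix distinct $i_1,i_2\in N$ and let $\hat N^c=N\setminus\{i_1,i_2\}$. Then the inequality $$x_{i_1i_2}+\sum_{j\in\hat N^c}\left(x_{i_1j}+x_{ji_1}\right)-\sum_{j\in\hat N^c}x_{ji_2}-\sum_{j,j'\in\hat N^c:\,j\ne j'} x_{jj'}\le 2-\frac{(n-3)(n-4)}{2}$$ defines a facet of the weak order polytope $P^n_{WO}$.
   Context: Let $N=\{1,\dots,n\}$ and $A_N=\{(i,j): i,j\in N, i\ne j\}$. A weak order on $N$ is a binary relation $W\subseteq N\times N$ that is reflexive, transitive and total; $(i,j)\in W$ is read "$i$ is preferred over or tied with $j$". The characteristic vector of $W$ is $x^W\in\{0,1\}^{A_N}$ with $x^W_{(i,j)}=1$ if $(i,j)\in W$ and $0$ otherwise. The weak order polytope $P^n_{WO}$ is the convex hull of the characteristic vectors of all weak orders on $N$; its points are vectors $x\in\mathbb{R}^{A_N}$ and $x_{ij}$ denotes the coordinate $x_{(i,j)}$. $P^n_{WO}$ has dimension $n(n-1)$. An inequality $\pi x\le\pi_0$ defines a facet of a polytope $P$ if it is valid for $P$ (holds for all $x\in P$) and the face $P\cap\{x:\pi x=\pi_0\}$ is nonempty, proper, and contains $\dim(P)$ affinely independent points. *)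

theory Defs
  imports "HOL-Analysis.Analysis"
begin

text \<open>The ground set N is modelled by a finite type 'n (n = CARD('n)).
  Points of R^{A_N} are embedded in real^('n \<times> 'n); the diagonal coordinates
  are never used (they are 0 for every characteristic vector and have
  coefficient 0 in every inequality), which does not affect convex hulls,
  affine independence or dimension.\<close>

definition arcs :: "('n::finite \<times> 'n) set" where
  "arcs = {(i, j). i \<noteq> j}"

definition weak_order :: "('n::finite \<times> 'n) set \<Rightarrow> bool" where
  "weak_order W \<longleftrightarrow> (\<forall>i. (i, i) \<in> W) \<and> trans W \<and> (\<forall>i j. (i, j) \<in> W \<or> (j, i) \<in> W)"

definition char_vec :: "('n::finite \<times> 'n) set \<Rightarrow> real ^ ('n \<times> 'n)" where
  "char_vec W = (\<chi> a. if a \<in> arcs \<and> a \<in> W then 1 else 0)"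

definition weak_order_polytope :: "(real ^ ('n::finite \<times> 'n)) set" where
  "weak_order_polytope = convex hull {char_vec W | W. weak_order W}"

definition lin_form :: "(('n::finite \<times> 'n) \<Rightarrow> real) \<Rightarrow> real ^ ('n \<times> 'n) \<Rightarrow> real" where
  "lin_form \<pi> x = (\<Sum>a\<in>arcs. \<pi> a * x $ a)"

definition defines_facet ::
  "(real ^ ('n::finite \<times> 'n)) set \<Rightarrow> (('n \<times> 'n) \<Rightarrow> real) \<Rightarrow> real \<Rightarrow> bool" where
  "defines_facet P \<pi> \<pi>0 \<longleftrightarrow>
     (\<forall>x\<in>P. lin_form \<pi> x \<le> \<pi>0) \<and>
     (let F = P \<inter> {x. lin_form \<pi> x = \<pi>0} in
        F \<noteq> {} \<and> F \<noteq> P \<and>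
        (\<exists>S. S \<subseteq> F \<and> finite S \<and> int (card S) = aff_dim P \<and> \<not> affine_dependent S))"

definition coeff8 :: "'n::finite \<Rightarrow> 'n \<Rightarrow> ('n \<times> 'n) \<Rightarrow> real" where
  "coeff8 i1 i2 a =
     (let Nc = UNIV - {i1, i2}; (i, j) = a in
      if i = i1 \<and> j = i2 then 1
      else if i = i1 \<and> j \<in> Nc then 1
      else if i \<in> Nc \<and> j = i1 then 1
      else if i \<in> Nc \<and> j = i2 then -1
      else if i \<in> Nc \<and> j \<in> Nc \<and> i \<noteq> j then -1
      else 0)"

end

theory Submission
  imports Defs
begin

(* Write C for N - {i1, i2}. For a weak order, totality turns x_{i1 j} + x_{j i1} into
   1 + [j tied with i1] and the sum over the ordered pairs of distinct elements of C into
   (|C| (|C| - 1) + #tied pairs in C) / 2. The inequality thus reduces to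
   [i1 before i2] + t - #{j in C. j before i2} - (#tied pairs in C) / 2 <= 1, where t elements
   of C are tied with i1. These t elements are pairwise tied, giving at least t (t - 1) tied
   pairs, and if i1 comes before i2 they all come before i2; either way the inequality holds.

   For the facet, rank i1, i2 and two elements j, k of C by numbers at most 3 and put all
   other elements strictly behind them, pairwise untied. Differences of tight such weak orders
   produce every unit vector modulo the one of the arc (i1, i2), so the tight vertices span a
   hyperplane of the arc space, and a non-tight such weak order makes the face proper. *)

lemma card_off_diagonal:
  assumes "finite X"
  shows "real (card (X \<times> X - Id_on X)) = real (card X) * (real (card X) - 1)"
proof -
  have diag: "Id_on X = (\<lambda>x. (x, x)) ` X" by auto
  then have "card (Id_on X) = card X" by (simp add: card_image inj_on_def)
  moreover have "finite (Id_on X)" using diag assms by simp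
  ultimately have "card (X \<times> X - Id_on X) = card X * card X - card X"
    by (simp add: card_Diff_subset Id_on_subset_Times card_cartesian_product)
  moreover have "card X \<le> card X * card X" by (simp add: le_square)
  ultimately show ?thesis by (simp add: of_nat_diff algebra_simps)
qed

lemma sum_off_diagonal_total:
  fixes W :: "('a \<times> 'a) set"
  assumes "finite X" and total: "\<And>x y. (x, y) \<in> W \<or> (y, x) \<in> W"
  shows "2 * (\<Sum>p\<in>X \<times> X - Id_on X. of_bool (p \<in> W) :: real) =
    real (card (X \<times> X - Id_on X)) + real (card ((X \<times> X - Id_on X) \<inter> (W \<inter> W\<inverse>)))"
proof -
  let ?D = "X \<times> X - Id_on X"
  have swap: "(\<Sum>p\<in>?D. of_bool (p \<in> W) :: real) = (\<Sum>p\<in>?D. of_bool (prod.swap p \<in> W))"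
    by (rule sum.reindex_bij_witness[of _ prod.swap prod.swap]) auto
  have "2 * (\<Sum>p\<in>?D. of_bool (p \<in> W) :: real) =
      (\<Sum>p\<in>?D. of_bool (p \<in> W)) + (\<Sum>p\<in>?D. of_bool (prod.swap p \<in> W))"
    by (simp only: swap[symmetric] mult_2)
  also have "\<dots> = (\<Sum>p\<in>?D. 1 + of_bool (p \<in> W \<inter> W\<inverse>))"
  proof -
    have "of_bool (p \<in> W) + of_bool (prod.swap p \<in> W) = (1::real) + of_bool (p \<in> W \<inter> W\<inverse>)"
      for p
      using total[of "fst p" "snd p"] by (cases p) auto
    then show ?thesis by (simp only: sum.distrib[symmetric])
  qed
  also have "\<dots> = real (card ?D) + real (card (?D \<inter> (W \<inter> W\<inverse>)))"
    using assms(1) by (simp add: sum.distrib Int_def)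
  finally show ?thesis .
qed

lemma sum_both_directions_total:
  fixes W :: "('a \<times> 'a) set"
  assumes "finite X" and total: "\<And>x y. (x, y) \<in> W \<or> (y, x) \<in> W"
  shows "(\<Sum>c\<in>X. of_bool ((a, c) \<in> W) + of_bool ((c, a) \<in> W)) =
    real (card X) + real (card {c\<in>X. (a, c) \<in> W \<inter> W\<inverse>})"
proof -
  have "(\<Sum>c\<in>X. of_bool ((a, c) \<in> W) + of_bool ((c, a) \<in> W)) =
      (\<Sum>c\<in>X. 1 + of_bool (c \<in> {c. (a, c) \<in> W \<inter> W\<inverse>}))"
    using total by (intro sum.cong) auto
  also have "\<dots> = real (card X) + real (card (X \<inter> {c. (a, c) \<in> W \<inter> W\<inverse>}))"
    using assms(1) by (simp add: sum.distrib)
  finally show ?thesis by (simp only: Int_def mem_Collect_eq)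
qed

lemma sum_arcs_restrict:
  assumes "S \<subseteq> arcs"
  shows "(\<Sum>u\<in>arcs. of_bool (u \<in> S) * f u) = (\<Sum>u\<in>S. f u :: real)"
  using assms by (simp add: Int_absorb1)

lemma coeff8_indicator_form:
  fixes a b :: "'n::finite"
  assumes "a \<noteq> b" "u \<in> arcs"
  defines "C \<equiv> UNIV - {a, b}"
  shows "coeff8 a b u = of_bool (u \<in> {(a, b)}) + of_bool (u \<in> {a} \<times> C) + of_bool (u \<in> C \<times> {a})
      - of_bool (u \<in> C \<times> {b}) - of_bool (u \<in> C \<times> C - Id_on C)"
  using assms by (cases u) (auto simp: coeff8_def arcs_def)

lemma lin_form_coeff8:
  fixes a b :: "'n::finite"
  assumes "a \<noteq> b"
  defines "C \<equiv> UNIV - {a, b}"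
  shows "lin_form (coeff8 a b) x =
    x $ (a, b) + (\<Sum>c\<in>C. x $ (a, c) + x $ (c, a) - x $ (c, b)) - (\<Sum>p\<in>C \<times> C - Id_on C. x $ p)"
proof -
  have arcs: "{(a, b)} \<subseteq> arcs" "{a} \<times> C \<subseteq> arcs" "C \<times> {a} \<subseteq> arcs" "C \<times> {b} \<subseteq> arcs"
      "C \<times> C - Id_on C \<subseteq> arcs"
    using assms by (auto simp: arcs_def C_def)
  have "lin_form (coeff8 a b) x =
      (\<Sum>u\<in>arcs. of_bool (u \<in> {(a, b)}) * x $ u + of_bool (u \<in> {a} \<times> C) * x $ u
        + of_bool (u \<in> C \<times> {a}) * x $ u - of_bool (u \<in> C \<times> {b}) * x $ u
        - of_bool (u \<in> C \<times> C - Id_on C) * x $ u)"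
    unfolding lin_form_def
    by (intro sum.cong refl)
      (simp only: coeff8_indicator_form[OF assms(1), folded C_def] left_diff_distrib distrib_right)
  also have "\<dots> = x $ (a, b) + (\<Sum>u\<in>{a} \<times> C. x $ u) + (\<Sum>u\<in>C \<times> {a}. x $ u)
      - (\<Sum>u\<in>C \<times> {b}. x $ u) - (\<Sum>p\<in>C \<times> C - Id_on C. x $ p)"
    by (simp only: sum.distrib sum_subtractf arcs[THEN sum_arcs_restrict]) simp
  also have "\<dots> = x $ (a, b) + (\<Sum>c\<in>C. x $ (a, c) + x $ (c, a) - x $ (c, b))
      - (\<Sum>p\<in>C \<times> C - Id_on C. x $ p)"
  proof -
    have "(\<Sum>u\<in>{a} \<times> C. x $ u) = (\<Sum>c\<in>C. x $ (a, c))"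
      by (rule sum.reindex_bij_witness[where i="Pair a" and j=snd]) auto
    moreover have "(\<Sum>u\<in>C \<times> {d}. x $ u) = (\<Sum>c\<in>C. x $ (c, d))" for d
      by (rule sum.reindex_bij_witness[where i="\<lambda>c. (c, d)" and j=fst]) auto
    ultimately show ?thesis by (simp add: sum.distrib sum_subtractf)
  qed
  finally show ?thesis .
qed

lemma lin_form_coeff8_weak_order:
  fixes a b :: "'n::finite"
  assumes "a \<noteq> b" and W: "weak_order W"
  defines "C \<equiv> UNIV - {a, b}"
  shows "2 * lin_form (coeff8 a b) (char_vec W) =
    2 * of_bool ((a, b) \<in> W) + 2 * real (card C) + 2 * real (card {c\<in>C. (a, c) \<in> W \<inter> W\<inverse>})
    - 2 * real (card {c\<in>C. (c, b) \<in> W}) - real (card (C \<times> C - Id_on C))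
    - real (card ((C \<times> C - Id_on C) \<inter> (W \<inter> W\<inverse>)))"
proof -
  have total: "\<And>x y. (x, y) \<in> W \<or> (y, x) \<in> W"
    using W by (simp add: weak_order_def)
  have entry: "char_vec W $ (x, y) = of_bool ((x, y) \<in> W)" if "x \<noteq> y" for x y
    using that by (simp add: char_vec_def arcs_def)
  have off_diagonal_entry: "char_vec W $ p = of_bool (p \<in> W)"
    if "p \<in> C \<times> C - Id_on C" for p
    using that entry by (cases p) (auto simp: Id_on_iff)
  have "lin_form (coeff8 a b) (char_vec W) = of_bool ((a, b) \<in> W)
      + (\<Sum>c\<in>C. of_bool ((a, c) \<in> W) + of_bool ((c, a) \<in> W)) - (\<Sum>c\<in>C. of_bool ((c, b) \<in> W))
      - (\<Sum>p\<in>C \<times> C - Id_on C. of_bool (p \<in> W))"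
  proof -
    have "(\<Sum>p\<in>C \<times> C - Id_on C. char_vec W $ p) =
        (\<Sum>p\<in>C \<times> C - Id_on C. of_bool (p \<in> W))"
      by (intro sum.cong refl) (rule off_diagonal_entry)
    moreover have "(\<Sum>c\<in>C. char_vec W $ (a, c) + char_vec W $ (c, a) - char_vec W $ (c, b)) =
        (\<Sum>c\<in>C. of_bool ((a, c) \<in> W) + of_bool ((c, a) \<in> W)) - (\<Sum>c\<in>C. of_bool ((c, b) \<in> W))"
      unfolding sum_subtractf[symmetric] by (intro sum.cong refl) (auto simp: entry C_def)
    ultimately show ?thesis
      using lin_form_coeff8[OF assms(1), of "char_vec W", folded C_def] entry[OF assms(1)] by simp
  qed
  moreover have "(\<Sum>c\<in>C. of_bool ((c, b) \<in> W)) = real (card {c\<in>C. (c, b) \<in> W})"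
    by (simp add: Int_def)
  ultimately show ?thesis
    using sum_both_directions_total[OF _ total] sum_off_diagonal_total[OF _ total] by simp
qed

definition rhs8 :: "nat \<Rightarrow> real" where
  "rhs8 n = 2 - real ((n - 3) * (n - 4)) / 2"

lemma rhs8_eq:
  assumes "4 \<le> n"
  shows "2 * rhs8 n = 4 - (real n - 3) * (real n - 4)"
proof -
  obtain k where "n = k + 4"
    using le_Suc_ex[OF assms] by (metis add.commute)
  then show ?thesis by (simp add: rhs8_def algebra_simps)
qed

lemma nat_diff_one_times_diff_two_nonneg: "0 \<le> (real n - 1) * (real n - 2)"
proof (cases "n \<le> 1")
  case True
  then have "n = 0 \<or> n = 1" by linarith
  then show ?thesis by auto
next
  case False
  then show ?thesis by (intro mult_nonneg_nonneg) auto
qed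

lemma lin_form_coeff8_le:
  fixes a b :: "'n::finite"
  assumes ab: "a \<noteq> b" and card: "4 \<le> CARD('n)" and W: "weak_order W"
  shows "lin_form (coeff8 a b) (char_vec W) \<le> rhs8 CARD('n)"
proof -
  define C where "C = UNIV - {a, b}"
  define T where "T = {c\<in>C. (a, c) \<in> W \<inter> W\<inverse>}"
  define B where "B = {c\<in>C. (c, b) \<in> W}"
  define ties where "ties = (C \<times> C - Id_on C) \<inter> (W \<inter> W\<inverse>)"
  define m where "m = real (card C)"
  define t where "t = real (card T)"
  have trans: "(x, z) \<in> W" if "(x, y) \<in> W" "(y, z) \<in> W" for x y z
    using W that unfolding weak_order_def trans_def by blast
  have "T \<times> T - Id_on T \<subseteq> ties"
    by (auto simp: T_def ties_def C_def intro: trans)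
  then have "real (card (T \<times> T - Id_on T)) \<le> real (card ties)"
    by (simp add: card_mono)
  then have ties_ge: "t * (t - 1) \<le> real (card ties)"
    by (simp add: card_off_diagonal t_def)
  have B_ge: "t \<le> real (card B)" if "(a, b) \<in> W"
  proof -
    have "T \<subseteq> B" using that by (auto simp: T_def B_def intro: trans)
    then show ?thesis unfolding t_def by (simp add: card_mono)
  qed
  have "2 * lin_form (coeff8 a b) (char_vec W) =
      2 * of_bool ((a, b) \<in> W) + 2 * m + 2 * t - 2 * real (card B) - m * (m - 1) - real (card ties)"
    using lin_form_coeff8_weak_order[OF ab W] card_off_diagonal[of C]
    unfolding C_def T_def B_def ties_def m_def t_def by simp
  moreover have "m = real CARD('n) - 2"
    using ab card unfolding m_def C_def by (simp add: card_Diff_subset of_nat_diff)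
  moreover note rhs8_eq[OF card]
  moreover have "0 \<le> (t - 1) * (t - 2)"
    unfolding t_def by (rule nat_diff_one_times_diff_two_nonneg)
  ultimately show ?thesis
    using ties_ge B_ge by (cases "(a, b) \<in> W") (simp_all add: algebra_simps)
qed

lemma ex_not_in_triple:
  fixes a b c :: "'n::finite"
  assumes "4 \<le> CARD('n)"
  shows "\<exists>d. d \<notin> {a, b, c}"
proof -
  have "card {a, b, c} < CARD('n)"
    using assms by (simp add: card_insert_if)
  then have "{a, b, c} \<noteq> UNIV" by auto
  then show ?thesis by auto
qed

lemma ex_inj_rank_above:
  obtains \<rho> :: "'a::finite \<Rightarrow> nat" where "inj \<rho>" "\<And>x. n \<le> \<rho> x"
proof -
  obtain g :: "'a \<Rightarrow> nat" where "inj g"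
    using finite_imp_inj_to_nat_seg[of "UNIV :: 'a set"] by auto
  then have "inj (\<lambda>x. g x + n)" by (simp add: inj_def)
  then show ?thesis using that[of "\<lambda>x. g x + n"] by simp
qed

definition rank_order :: "('a \<Rightarrow> nat) \<Rightarrow> ('a \<times> 'a) set" where
  "rank_order r = {(x, y). r x \<le> r y}"

lemma weak_order_rank_order: "weak_order (rank_order r)"
  unfolding weak_order_def rank_order_def trans_def by auto

lemma rank_order_indifference: "rank_order r \<inter> (rank_order r)\<inverse> = {(x, y). r x = r y}"
  unfolding rank_order_def by auto

lemma card_filter_doubleton:
  assumes "j \<noteq> k"
  shows "card {c\<in>{j, k}. P c} = of_bool (P j) + of_bool (P k)"
proof -
  have "{c\<in>{j, k}. P c} = (if P j then {j} else {}) \<union> (if P k then {k} else {})"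
    by auto
  then show ?thesis using assms by simp
qed

definition rank_score :: "nat \<Rightarrow> nat \<Rightarrow> nat \<Rightarrow> nat \<Rightarrow> real" where
  "rank_score ra rb rj rk = of_bool (ra \<le> rb) + of_bool (ra = rj) + of_bool (ra = rk)
    - of_bool (rj \<le> rb) - of_bool (rk \<le> rb) - of_bool (rj = rk)"

(* The elements of C other than j and k come last and are pairwise untied, so in the counts of
   lin_form_coeff8_weak_order only j and k can be tied with a, precede b or be tied together. *)
lemma lin_form_coeff8_rank_order:
  fixes a b j k :: "'n::finite" and \<rho> :: "'n \<Rightarrow> nat"
  assumes ab: "a \<noteq> b" and card: "4 \<le> CARD('n)"
    and jk: "j \<notin> {a, b}" "k \<notin> {a, b}" "j \<noteq> k"
    and \<rho>: "inj \<rho>" "\<And>x. 4 \<le> \<rho> x"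
    and ranks: "ra \<le> 3" "rb \<le> 3" "rj \<le> 3" "rk \<le> 3"
  defines "r \<equiv> \<rho>(a := ra, b := rb, j := rj, k := rk)"
  shows "lin_form (coeff8 a b) (char_vec (rank_order r)) =
    rhs8 CARD('n) + rank_score ra rb rj rk - 1"
proof -
  define C where "C = UNIV - {a, b}"
  define W where "W = rank_order r"
  have r: "r a = ra" "r b = rb" "r j = rj" "r k = rk"
    using ab jk by (auto simp: r_def)
  have r_other: "r c = \<rho> c" "3 < r c" if "c \<in> C" "c \<notin> {j, k}" for c
    using that \<rho>(2)[of c] by (auto simp: C_def r_def)
  have jkC: "j \<in> C" "k \<in> C" using jk by (auto simp: C_def)
  have "{c\<in>C. (a, c) \<in> W \<inter> W\<inverse>} = {c\<in>{j, k}. ra = r c}"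
    using r_other jkC ranks r by (force simp: W_def rank_order_indifference)
  then have tied_a: "card {c\<in>C. (a, c) \<in> W \<inter> W\<inverse>} = of_bool (ra = rj) + of_bool (ra = rk)"
    using card_filter_doubleton[OF jk(3)] r by simp
  have "{c\<in>C. (c, b) \<in> W} = {c\<in>{j, k}. r c \<le> rb}"
    using r_other jkC ranks r by (force simp: W_def rank_order_def)
  then have below_b: "card {c\<in>C. (c, b) \<in> W} = of_bool (rj \<le> rb) + of_bool (rk \<le> rb)"
    using card_filter_doubleton[OF jk(3)] r by simp
  have "(C \<times> C - Id_on C) \<inter> (W \<inter> W\<inverse>) = (if rj = rk then {(j, k), (k, j)} else {})"
  proof -
    have tied_in_jk: "x \<in> {j, k} \<and> y \<in> {j, k}"
      if "x \<in> C" "y \<in> C" "x \<noteq> y" "r x = r y" for x y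
      using that r_other[of x] r_other[of y] injD[OF \<rho>(1), of x y] ranks r by fastforce
    have "(C \<times> C - Id_on C) \<inter> (W \<inter> W\<inverse>) =
        {(x, y). x \<in> {j, k} \<and> y \<in> {j, k} \<and> x \<noteq> y \<and> r x = r y}"
      using jkC by (auto simp: W_def rank_order_indifference Id_on_iff dest: tied_in_jk)
    also have "\<dots> = (if rj = rk then {(j, k), (k, j)} else {})"
      using jk(3) r by auto
    finally show ?thesis .
  qed
  then have ties: "card ((C \<times> C - Id_on C) \<inter> (W \<inter> W\<inverse>)) = 2 * of_bool (rj = rk)"
    using jk(3) by simp
  have m: "real (card C) = real CARD('n) - 2"
    using ab card unfolding C_def by (simp add: card_Diff_subset of_nat_diff)
  show ?thesis
    using lin_form_coeff8_weak_order[OF ab weak_order_rank_order, of r, folded C_def W_def]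
      tied_a below_b ties card_off_diagonal[of C] m rhs8_eq[OF card] r
    by (simp add: W_def rank_order_def rank_score_def algebra_simps)
qed

lemma char_vec_rank_order_differences:
  fixes a b j k :: "'n::finite" and \<rho> :: "'n \<Rightarrow> nat"
  assumes "distinct [a, b, j, k]" and "\<And>x. 4 \<le> \<rho> x"
  defines "v \<equiv> \<lambda>ra rb rj rk. char_vec (rank_order (\<rho>(a := ra, b := rb, j := rj, k := rk)))"
  shows "v 0 0 1 2 - v 0 1 2 3 = axis (b, a) 1"
    and "v 0 0 0 1 - v 0 0 1 2 = axis (j, a) 1 + axis (j, b) 1"
    and "v 0 0 0 1 - v 0 1 0 2 = axis (b, a) 1 + axis (b, j) 1"
    and "v 0 1 0 2 - v 1 0 1 2 = axis (a, b) 1 + axis (j, b) 1 - axis (b, a) 1 - axis (b, j) 1"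
    and "v 1 0 1 1 - v 1 0 1 2 = axis (k, a) 1 + axis (k, j) 1"
    and "v 1 0 1 1 - v 2 0 2 1 = axis (a, k) 1 + axis (j, k) 1"
proof -
  have "\<not> \<rho> x \<le> n" "n \<le> \<rho> x" if "n \<le> 3" for x n
    using that assms(2)[of x] by linarith+
  moreover have "0 < \<rho> x" for x
    using assms(2)[of x] by linarith
  ultimately show "v 0 0 1 2 - v 0 1 2 3 = axis (b, a) 1"
    and "v 0 0 0 1 - v 0 0 1 2 = axis (j, a) 1 + axis (j, b) 1"
    and "v 0 0 0 1 - v 0 1 0 2 = axis (b, a) 1 + axis (b, j) 1"
    and "v 0 1 0 2 - v 1 0 1 2 = axis (a, b) 1 + axis (j, b) 1 - axis (b, a) 1 - axis (b, j) 1"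
    and "v 1 0 1 1 - v 1 0 1 2 = axis (k, a) 1 + axis (k, j) 1"
    and "v 1 0 1 1 - v 2 0 2 1 = axis (a, k) 1 + axis (j, k) 1"
    using assms(1) unfolding vec_eq_iff v_def
    by (auto simp: char_vec_def rank_order_def axis_def arcs_def)
qed

context
  fixes a b :: "'n::finite" and M :: "(real ^ ('n \<times> 'n)) set"
  assumes ab: "a \<noteq> b" and card: "4 \<le> CARD('n)"
    and M: "subspace M" "axis (a, b) 1 \<in> M"
    and tight_diff: "\<And>W W'. weak_order W \<Longrightarrow> weak_order W' \<Longrightarrow>
      lin_form (coeff8 a b) (char_vec W) = rhs8 CARD('n) \<Longrightarrow>
      lin_form (coeff8 a b) (char_vec W') = rhs8 CARD('n) \<Longrightarrow> char_vec W - char_vec W' \<in> M"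
begin

lemma rank_order_differences_in_subspace:
  assumes jk: "j \<notin> {a, b}" "k \<notin> {a, b}" "j \<noteq> k"
  shows "axis (b, a) 1 \<in> M"
    and "axis (j, a) 1 + axis (j, b) 1 \<in> M"
    and "axis (b, a) 1 + axis (b, j) 1 \<in> M"
    and "axis (a, b) 1 + axis (j, b) 1 - axis (b, a) 1 - axis (b, j) 1 \<in> M"
    and "axis (k, a) 1 + axis (k, j) 1 \<in> M"
    and "axis (a, k) 1 + axis (j, k) 1 \<in> M"
proof -
  obtain \<rho> :: "'n \<Rightarrow> nat" where \<rho>: "inj \<rho>" "\<And>x. 4 \<le> \<rho> x"
    using ex_inj_rank_above by blast
  have diff: "char_vec (rank_order (\<rho>(a := ra, b := rb, j := rj, k := rk)))
      - char_vec (rank_order (\<rho>(a := ra', b := rb', j := rj', k := rk'))) \<in> M"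
    if "ra \<le> 3" "rb \<le> 3" "rj \<le> 3" "rk \<le> 3" "rank_score ra rb rj rk = 1"
      "ra' \<le> 3" "rb' \<le> 3" "rj' \<le> 3" "rk' \<le> 3" "rank_score ra' rb' rj' rk' = 1"
    for ra rb rj rk ra' rb' rj' rk'
    using tight_diff[OF weak_order_rank_order weak_order_rank_order]
      lin_form_coeff8_rank_order[OF ab card jk \<rho> that(1-4)]
      lin_form_coeff8_rank_order[OF ab card jk \<rho> that(6-9)] that(5,10)
    by simp
  have "distinct [a, b, j, k]"
    using ab jk by auto
  note d = char_vec_rank_order_differences[OF this \<rho>(2)]
  show "axis (b, a) 1 \<in> M"
    using diff[of 0 0 1 2 0 1 2 3] unfolding d(1) by (simp add: rank_score_def)
  show "axis (j, a) 1 + axis (j, b) 1 \<in> M"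
    using diff[of 0 0 0 1 0 0 1 2] unfolding d(2) by (simp add: rank_score_def)
  show "axis (b, a) 1 + axis (b, j) 1 \<in> M"
    using diff[of 0 0 0 1 0 1 0 2] unfolding d(3) by (simp add: rank_score_def)
  show "axis (a, b) 1 + axis (j, b) 1 - axis (b, a) 1 - axis (b, j) 1 \<in> M"
    using diff[of 0 1 0 2 1 0 1 2] unfolding d(4) by (simp add: rank_score_def)
  show "axis (k, a) 1 + axis (k, j) 1 \<in> M"
    using diff[of 1 0 1 1 1 0 1 2] unfolding d(5) by (simp add: rank_score_def)
  show "axis (a, k) 1 + axis (j, k) 1 \<in> M"
    using diff[of 1 0 1 1 2 0 2 1] unfolding d(6) by (simp add: rank_score_def)
qed

lemma axes_at_pair_in_subspace:
  assumes c: "c \<notin> {a, b}" "c' \<notin> {a, b}" "c \<noteq> c'"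
  shows "axis (b, a) 1 \<in> M" "axis (c, a) 1 \<in> M" "axis (a, c) 1 \<in> M"
    "axis (c, b) 1 \<in> M" "axis (b, c) 1 \<in> M" "axis (c, c') 1 \<in> M"
proof -
  have sub: "x - y \<in> M" "x + y \<in> M" if "x \<in> M" "y \<in> M" for x y
    using M(1) that by (simp_all add: subspace_diff subspace_add)
  have towards_b: "axis (d, a) 1 \<in> M" "axis (d, b) 1 \<in> M" "axis (b, d) 1 \<in> M"
    if "d \<notin> {a, b}" "d' \<notin> {a, b}" "d \<noteq> d'" for d d'
  proof -
    note m = rank_order_differences_in_subspace[OF that]
    show bd: "axis (b, d) 1 \<in> M"
      using sub(1)[OF m(3) m(1)] by simp
    show db: "axis (d, b) 1 \<in> M"
      using sub(1)[OF sub(2)[OF sub(2)[OF m(4) m(1)] bd] M(2)] by simp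
    show "axis (d, a) 1 \<in> M"
      using sub(1)[OF m(2) db] by simp
  qed
  note m = rank_order_differences_in_subspace[OF c]
    and m' = rank_order_differences_in_subspace[OF c(2,1) c(3)[symmetric]]
  note c_side = towards_b[OF c] and c'_side = towards_b[OF c(2,1) c(3)[symmetric]]
  show "axis (b, a) 1 \<in> M" "axis (c, a) 1 \<in> M" "axis (c, b) 1 \<in> M" "axis (b, c) 1 \<in> M"
    using m(1) c_side by simp_all
  show "axis (c, c') 1 \<in> M"
    using sub(1)[OF m'(5) c_side(1)] by simp
  have c'c: "axis (c', c) 1 \<in> M"
    using sub(1)[OF m(5) c'_side(1)] by simp
  show "axis (a, c) 1 \<in> M"
    using sub(1)[OF m'(6) c'c] by simp
qed

lemma axis_arc_in_subspace:
  assumes "u \<in> arcs"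
  shows "axis u 1 \<in> M"
proof -
  obtain x y where u: "u = (x, y)" "x \<noteq> y"
    using assms by (auto simp: arcs_def)
  note partner = ex_not_in_triple[OF card]
  consider "x \<in> {a, b}" "y \<in> {a, b}" | "x \<notin> {a, b}" | "y \<notin> {a, b}"
    by blast
  then show ?thesis
  proof cases
    case 1
    obtain c where c: "c \<notin> {a, b}" using partner[of a b a] by auto
    obtain c' where "c' \<notin> {a, b, c}" using partner[of a b c] by auto
    then have "axis (b, a) 1 \<in> M" using axes_at_pair_in_subspace[of c c'] c by auto
    then show ?thesis using 1 u M(2) by auto
  next
    case 2
    obtain c' where c': "c' \<notin> {a, b, x}" using partner[of a b x] by auto
    then show ?thesis
      using axes_at_pair_in_subspace[of x c'] axes_at_pair_in_subspace(6)[of x y] 2 u by auto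
  next
    case 3
    obtain c' where c': "c' \<notin> {a, b, y}" using partner[of a b y] by auto
    then show ?thesis
      using axes_at_pair_in_subspace[of y c'] axes_at_pair_in_subspace(6)[of x y] 3 u by auto
  qed
qed

end

lemma tight_and_slack_rank_orders:
  fixes a b :: "'n::finite"
  assumes ab: "a \<noteq> b" and card: "4 \<le> CARD('n)"
  obtains W0 W1 where "weak_order W0" "lin_form (coeff8 a b) (char_vec W0) = rhs8 CARD('n)"
    and "weak_order W1" "lin_form (coeff8 a b) (char_vec W1) < rhs8 CARD('n)"
proof -
  obtain \<rho> :: "'n \<Rightarrow> nat" where \<rho>: "inj \<rho>" "\<And>x. 4 \<le> \<rho> x"
    using ex_inj_rank_above by blast
  obtain j where j: "j \<notin> {a, b}" using ex_not_in_triple[OF card, of a b a] by auto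
  obtain k where k: "k \<notin> {a, b, j}" using ex_not_in_triple[OF card, of a b j] by auto
  have jk: "j \<notin> {a, b}" "k \<notin> {a, b}" "j \<noteq> k" using j k by auto
  have "lin_form (coeff8 a b) (char_vec (rank_order (\<rho>(a := 0, b := 1, j := 2, k := 3)))) =
      rhs8 CARD('n)"
    using lin_form_coeff8_rank_order[OF ab card jk \<rho>, of 0 1 2 3] by (simp add: rank_score_def)
  moreover have "lin_form (coeff8 a b) (char_vec (rank_order (\<rho>(a := 1, b := 0, j := 0, k := 2)))) <
      rhs8 CARD('n)"
    using lin_form_coeff8_rank_order[OF ab card jk \<rho>, of 1 0 0 2] by (simp add: rank_score_def)
  ultimately show ?thesis
    using that weak_order_rank_order by blast
qed

definition arc_vectors :: "(real ^ ('n::finite \<times> 'n)) set" where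
  "arc_vectors = {x. \<forall>u. u \<notin> arcs \<longrightarrow> x $ u = 0}"

lemma
  shows subspace_arc_vectors: "subspace (arc_vectors :: (real ^ ('n::finite \<times> 'n)) set)"
    and dim_arc_vectors:
      "dim (arc_vectors :: (real ^ ('n::finite \<times> 'n)) set) = card (arcs :: ('n \<times> 'n) set)"
  using subspace_substandard_cart[of "\<lambda>u. u \<notin> (arcs :: ('n \<times> 'n) set)", where 'a=real]
    dim_substandard_cart[of "arcs :: ('n \<times> 'n) set", where 'a=real]
  by (simp_all add: arc_vectors_def subspace_vec_eq dim_vec_eq)

lemma aff_dim_le_card_arcs:
  fixes S :: "(real ^ ('n::finite \<times> 'n)) set"
  assumes "S \<subseteq> arc_vectors"
  shows "aff_dim S \<le> int (card (arcs :: ('n \<times> 'n) set))"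
proof -
  have "aff_dim S \<le> aff_dim (arc_vectors :: (real ^ ('n \<times> 'n)) set)"
    using assms by (rule aff_dim_subset)
  also have "\<dots> = int (card (arcs :: ('n \<times> 'n) set))"
    by (simp only: aff_dim_subspace[OF subspace_arc_vectors] dim_arc_vectors)
  finally show ?thesis .
qed

lemma card_arcs_le_aff_dim_plus_one:
  fixes F :: "(real ^ ('n::finite \<times> 'n)) set"
  assumes "v \<in> F"
    and axes: "\<And>u. u \<in> arcs \<Longrightarrow> axis u 1 \<in> span (insert e ((\<lambda>x. x - v) ` F))"
  shows "int (card (arcs :: ('n \<times> 'n) set)) \<le> aff_dim F + 1"
proof -
  let ?M = "span (insert e ((\<lambda>x. x - v) ` F))"
  have "arc_vectors \<subseteq> ?M"
  proof
    fix x :: "real ^ ('n \<times> 'n)"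
    assume "x \<in> arc_vectors"
    have "x = (\<Sum>u\<in>UNIV. x $ u *\<^sub>R axis u 1)"
      using basis_expansion[of x] by (simp add: scalar_mult_eq_scaleR)
    also have "\<dots> = (\<Sum>u\<in>arcs. x $ u *\<^sub>R axis u 1)"
      using \<open>x \<in> arc_vectors\<close> by (intro sum.mono_neutral_right) (auto simp: arc_vectors_def)
    also have "\<dots> \<in> ?M"
      by (intro span_sum span_scale axes)
    finally show "x \<in> ?M" .
  qed
  then have "dim (arc_vectors :: (real ^ ('n \<times> 'n)) set) \<le> dim ?M"
    by (rule dim_subset)
  then have "card (arcs :: ('n \<times> 'n) set) \<le> dim ?M"
    by (simp only: dim_arc_vectors)
  also have "\<dots> \<le> dim ((\<lambda>x. x - v) ` F) + 1"
    by (simp add: dim_insert)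
  finally have "int (card (arcs :: ('n \<times> 'n) set)) \<le> int (dim ((\<lambda>x. x - v) ` F)) + 1"
    by linarith
  also have "int (dim ((\<lambda>x. x - v) ` F)) = aff_dim F"
    using aff_dim_eq_dim_subtract[OF hull_inc[OF \<open>v \<in> F\<close>]] by simp
  finally show ?thesis .
qed

lemma lin_form_eq_inner: "lin_form \<pi> x = (\<chi> u. if u \<in> arcs then \<pi> u else 0) \<bullet> x"
proof -
  have "(\<chi> u. if u \<in> arcs then \<pi> u else 0) \<bullet> x =
      (\<Sum>u\<in>UNIV. if u \<in> arcs then \<pi> u * x $ u else 0)"
    unfolding inner_vec_def by (intro sum.cong) auto
  also have "\<dots> = lin_form \<pi> x"
    by (simp add: sum.If_cases lin_form_def)
  finally show ?thesis ..
qed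

(* The vector e accounts for the normal direction of the face, which differences of its
   points cannot produce; counting dimensions, the face then has codimension one. *)
lemma aff_dim_convex_hull_eq_face_plus_one:
  fixes G F :: "(real ^ ('n::finite \<times> 'n)) set" and \<pi> :: "'n \<times> 'n \<Rightarrow> real" and \<beta> :: real
  assumes "G \<subseteq> arc_vectors" and F: "F \<subseteq> {x \<in> G. lin_form \<pi> x = \<beta>}"
    and p: "p \<in> G" "lin_form \<pi> p < \<beta>"
    and v: "v \<in> F"
    and axes: "\<And>M u. subspace M \<Longrightarrow> e \<in> M \<Longrightarrow>
      (\<And>x y. x \<in> F \<Longrightarrow> y \<in> F \<Longrightarrow> x - y \<in> M) \<Longrightarrow> u \<in> arcs \<Longrightarrow> axis u 1 \<in> M"
  shows "aff_dim (convex hull G) = aff_dim F + 1"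
proof -
  let ?M = "span (insert e ((\<lambda>x. x - v) ` F))"
  have diff: "x - y \<in> ?M" if "x \<in> F" "y \<in> F" for x y
  proof -
    have "x - v \<in> ?M" "y - v \<in> ?M"
      using that by (simp_all add: span_base)
    from span_diff[OF this] show ?thesis by simp
  qed
  have "axis u 1 \<in> ?M" if "u \<in> arcs" for u
    by (rule axes[OF subspace_span _ diff that]) (simp add: span_base)
  then have "int (card (arcs :: ('n \<times> 'n) set)) \<le> aff_dim F + 1"
    using v by (rule card_arcs_le_aff_dim_plus_one[rotated])
  moreover have "aff_dim (convex hull G) \<le> int (card (arcs :: ('n \<times> 'n) set))"
    using aff_dim_le_card_arcs[OF \<open>G \<subseteq> arc_vectors\<close>] by (simp add: aff_dim_convex_hull)
  moreover have "affine hull F \<subseteq> {x. lin_form \<pi> x = \<beta>}"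
    using F unfolding lin_form_eq_inner by (intro hull_minimal) (auto simp: affine_hyperplane)
  then have "aff_dim F + 1 = aff_dim (insert p F)"
    using p by (auto simp: aff_dim_insert)
  moreover have "insert p F \<subseteq> G"
    using p F by auto
  then have "aff_dim (insert p F) \<le> aff_dim (convex hull G)"
    by (simp add: aff_dim_convex_hull aff_dim_subset)
  ultimately show ?thesis
    by linarith
qed

lemma defines_facet_convex_hullI:
  fixes G :: "(real ^ ('n::finite \<times> 'n)) set" and \<pi> :: "'n \<times> 'n \<Rightarrow> real" and \<beta> :: real
  defines "F \<equiv> {x \<in> G. lin_form \<pi> x = \<beta>}"
  assumes "finite G" and "G \<subseteq> arc_vectors"
    and valid: "\<And>x. x \<in> G \<Longrightarrow> lin_form \<pi> x \<le> \<beta>"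
    and p: "p \<in> G" "lin_form \<pi> p < \<beta>"
    and v: "v \<in> F"
    and axes: "\<And>M u. subspace M \<Longrightarrow> e \<in> M \<Longrightarrow>
      (\<And>x y. x \<in> F \<Longrightarrow> y \<in> F \<Longrightarrow> x - y \<in> M) \<Longrightarrow> u \<in> arcs \<Longrightarrow> axis u 1 \<in> M"
  shows "defines_facet (convex hull G) \<pi> \<beta>"
proof -
  obtain S where S: "S \<subseteq> F" "\<not> affine_dependent S" "affine hull F = affine hull S"
    using affine_basis_exists[of F] by blast
  have dim_F: "aff_dim (convex hull G) = aff_dim F + 1"
    by (rule aff_dim_convex_hull_eq_face_plus_one[OF \<open>G \<subseteq> arc_vectors\<close> _ p v axes])
      (simp add: F_def)
  have face: "F \<subseteq> convex hull G \<inter> {x. lin_form \<pi> x = \<beta>}"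
    unfolding F_def using hull_subset[of G convex] by blast
  show ?thesis
    unfolding defines_facet_def Let_def
  proof (intro conjI)
    have "convex hull G \<subseteq> {x. lin_form \<pi> x \<le> \<beta>}"
      using valid unfolding lin_form_eq_inner by (intro hull_minimal convex_halfspace_le) auto
    then show "\<forall>x\<in>convex hull G. lin_form \<pi> x \<le> \<beta>" by blast
    show "convex hull G \<inter> {x. lin_form \<pi> x = \<beta>} \<noteq> {}"
      using face v by blast
    show "convex hull G \<inter> {x. lin_form \<pi> x = \<beta>} \<noteq> convex hull G"
      using p hull_subset[of G convex] by auto
    have "finite S"
      using finite_subset[OF S(1)] \<open>finite G\<close> unfolding F_def by simp
    moreover have "int (card S) = aff_dim (convex hull G)"
      using dim_F aff_dim_affine_independent[OF S(2)] aff_dim_affine_hull2[OF S(3)] by simp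
    ultimately show "\<exists>S. S \<subseteq> convex hull G \<inter> {x. lin_form \<pi> x = \<beta>} \<and> finite S
        \<and> int (card S) = aff_dim (convex hull G) \<and> \<not> affine_dependent S"
      using S(1,2) face by blast
  qed
qed

theorem mainTheorem8:
  fixes i1 i2 :: "'n::finite"
  assumes "CARD('n) \<ge> 4" and "i1 \<noteq> i2"
  shows "defines_facet (weak_order_polytope :: (real ^ ('n \<times> 'n)) set) (coeff8 i1 i2)
           (2 - real ((CARD('n) - 3) * (CARD('n) - 4)) / 2)"
proof -
  define G where "G = {char_vec W | W :: ('n \<times> 'n) set. weak_order W}"
  let ?F = "{x \<in> G. lin_form (coeff8 i1 i2) x = rhs8 CARD('n)}"
  obtain W0 W1 where W0: "weak_order W0" "lin_form (coeff8 i1 i2) (char_vec W0) = rhs8 CARD('n)"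
    and W1: "weak_order W1" "lin_form (coeff8 i1 i2) (char_vec W1) < rhs8 CARD('n)"
    using tight_and_slack_rank_orders[OF assms(2,1)] by blast
  have "defines_facet (convex hull G) (coeff8 i1 i2) (rhs8 CARD('n))"
  proof (rule defines_facet_convex_hullI[where p = "char_vec W1" and v = "char_vec W0"])
    show "finite G"
      unfolding G_def by (rule finite_subset[of _ "range char_vec"]) auto
    show "G \<subseteq> arc_vectors"
      unfolding G_def arc_vectors_def by (auto simp: char_vec_def)
    show "lin_form (coeff8 i1 i2) x \<le> rhs8 CARD('n)" if "x \<in> G" for x
      using that lin_form_coeff8_le[OF assms(2,1)] unfolding G_def by auto
    show "char_vec W1 \<in> G" "char_vec W0 \<in> ?F"
      using W0 W1 unfolding G_def by auto
    show "lin_form (coeff8 i1 i2) (char_vec W1) < rhs8 CARD('n)"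
      by (rule W1(2))
    show "axis u 1 \<in> M"
      if "subspace M" "axis (i1, i2) 1 \<in> M" "\<And>x y. x \<in> ?F \<Longrightarrow> y \<in> ?F \<Longrightarrow> x - y \<in> M" "u \<in> arcs"
      for M u
      using that(3)
      by (intro axis_arc_in_subspace[OF assms(2,1) that(1,2) _ that(4)]) (auto simp: G_def)
  qed
  then show ?thesis
    unfolding weak_order_polytope_def G_def rhs8_def .
qed

end
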